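(* Let $H$ and $G$ be finite simple graphs with $n=|V(H)|$, $\Delta=\Delta(H)\ge 1$ and $\delta=\delta(G)\ge 1$. Let $S\subseteq V(H)$ be a maximum $G$-free subset of $V(H)$, and for each integer $i\ge 0$ let $n_i(S)$ denote the number of vertices of $V(H)\setminus S$ having exactly $i$ neighbours in $S$. Then \[ n-\frac{\sum_{i=\delta}^{\Delta} i\, n_i(S)}{\delta}\ \le\ |S|\ \le\ n-\frac{\sum_{i=\delta}^{\Delta} i\, n_i(S)}{\Delta}.\]
   Context: All graphs are finite, simple and undirected. For $W\subseteq V(H)$, $H[W]$ denotes the induced subgraph on $W$. A set $S\subseteq V(H)$ is called $G$-free if $H[S]$ contains no subgraph isomorphic to $G$. A maximum $G$-free subset of $V(H)$ is a $G$-free subset $S\subseteq V(H)$ of largest possible cardinality. $\Delta(H)$ is the maximum degree of $H$, $\delta(G)$ the minimum degree of $G$. *)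

theory Defs
  imports Complex_Main
begin

definition simple_graph :: "'a set \<Rightarrow> 'a set set \<Rightarrow> bool" where
  "simple_graph V E \<longleftrightarrow> finite V \<and> (\<forall>e\<in>E. e \<subseteq> V \<and> card e = 2)"

definition neighbours :: "'a set \<Rightarrow> 'a set set \<Rightarrow> 'a \<Rightarrow> 'a set" where
  "neighbours V E v = {u \<in> V. {v, u} \<in> E}"

definition degree :: "'a set \<Rightarrow> 'a set set \<Rightarrow> 'a \<Rightarrow> nat" where
  "degree V E v = card (neighbours V E v)"

definition max_degree :: "'a set \<Rightarrow> 'a set set \<Rightarrow> nat" where
  "max_degree V E = Max (degree V E ` V)"

definition min_degree :: "'a set \<Rightarrow> 'a set set \<Rightarrow> nat" where
  "min_degree V E = Min (degree V E ` V)"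

definition induced_edges :: "'a set set \<Rightarrow> 'a set \<Rightarrow> 'a set set" where
  "induced_edges E W = {e \<in> E. e \<subseteq> W}"

definition contains_copy :: "'b set \<Rightarrow> 'b set set \<Rightarrow> 'a set \<Rightarrow> 'a set set \<Rightarrow> bool" where
  "contains_copy VG EG W F \<longleftrightarrow>
     (\<exists>f. inj_on f VG \<and> f ` VG \<subseteq> W \<and> (\<forall>e\<in>EG. f ` e \<in> F))"

definition G_free :: "'b set \<Rightarrow> 'b set set \<Rightarrow> 'a set \<Rightarrow> 'a set set \<Rightarrow> 'a set \<Rightarrow> bool" where
  "G_free VG EG VH EH S \<longleftrightarrow> S \<subseteq> VH \<and> \<not> contains_copy VG EG S (induced_edges EH S)"

definition max_G_free :: "'b set \<Rightarrow> 'b set set \<Rightarrow> 'a set \<Rightarrow> 'a set set \<Rightarrow> 'a set \<Rightarrow> bool" where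
  "max_G_free VG EG VH EH S \<longleftrightarrow> G_free VG EG VH EH S \<and>
     (\<forall>T. G_free VG EG VH EH T \<longrightarrow> card T \<le> card S)"

definition n_i :: "'a set \<Rightarrow> 'a set set \<Rightarrow> 'a set \<Rightarrow> nat \<Rightarrow> nat" where
  "n_i VH EH S i = card {v \<in> VH - S. card (neighbours VH EH v \<inter> S) = i}"

end

theory Submission
  imports Defs
begin

text \<open>Every vertex v outside a maximum G-free set S has at least \<delta>(G) neighbours in S:
  S \<union> {v} is not G-free, a copy of G in it must use v, and the images of the
  \<ge> \<delta>(G) neighbours of v's preimage are neighbours of v in S. The sum of i n_i(S) counts the S-neighbours of the vertices outside S,
  so it lies between \<delta>(G) (n - |S|) and \<Delta>(H) (n - |S|).\<close>

lemma sum_weighted_fibre_card: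
  fixes c :: "'a \<Rightarrow> nat"
  assumes "finite T" and "\<And>v. v \<in> T \<Longrightarrow> a \<le> c v \<and> c v \<le> b"
  shows "(\<Sum>i = a..b. i * card {v \<in> T. c v = i}) = (\<Sum>v\<in>T. c v)"
proof -
  have "(\<Sum>v\<in>T. c v) = (\<Sum>i\<in>{a..b}. \<Sum>v\<in>{v\<in>T. c v = i}. c v)"
    by (rule sum.group[symmetric]) (use assms in auto)
  also have "\<dots> = (\<Sum>i = a..b. i * card {v \<in> T. c v = i})"
    by (rule sum.cong) auto
  finally show ?thesis by simp
qed

lemma card_neighbours_inter_le_max_degree:
  assumes "finite V" and "v \<in> V"
  shows "card (neighbours V E v \<inter> S) \<le> max_degree V E"
proof -
  have "card (neighbours V E v \<inter> S) \<le> degree V E v"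
    unfolding degree_def by (rule card_mono) (auto simp: neighbours_def assms(1))
  also have "\<dots> \<le> max_degree V E"
    unfolding max_degree_def using assms by simp
  finally show ?thesis .
qed

lemma contains_copy_restrict:
  assumes "simple_graph VG EG" and "inj_on f VG" and "f ` VG \<subseteq> W'" and "W' \<subseteq> W"
    and "\<forall>e\<in>EG. f ` e \<in> induced_edges EH W"
  shows "contains_copy VG EG W' (induced_edges EH W')"
proof -
  have "f ` e \<in> induced_edges EH W'" if "e \<in> EG" for e
  proof -
    have "e \<subseteq> VG" using that assms(1) by (simp add: simple_graph_def)
    then show ?thesis using that assms(3,5) by (auto simp: induced_edges_def)
  qed
  then show ?thesis unfolding contains_copy_def using assms(2,3) by blast
qed

lemma degree_le_card_neighbours_of_image:
  assumes "simple_graph VG EG" and "inj_on f VG" and "f ` VG \<subseteq> W" and "W \<subseteq> V"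
    and "\<forall>e\<in>EG. f ` e \<in> induced_edges E W" and "u \<in> VG" and "finite W"
  shows "degree VG EG u \<le> card (neighbours V E (f u) \<inter> (W - {f u}))"
proof -
  have "degree VG EG u = card (f ` neighbours VG EG u)"
    unfolding degree_def
    by (rule card_image[symmetric], rule inj_on_subset[OF assms(2)]) (auto simp: neighbours_def)
  also have "\<dots> \<le> card (neighbours V E (f u) \<inter> (W - {f u}))"
  proof (rule card_mono)
    show "finite (neighbours V E (f u) \<inter> (W - {f u}))" using assms(7) by simp
    show "f ` neighbours VG EG u \<subseteq> neighbours V E (f u) \<inter> (W - {f u})"
    proof
      fix y assume "y \<in> f ` neighbours VG EG u"
      then obtain w where w: "w \<in> VG" "{u, w} \<in> EG" "y = f w"
        by (auto simp: neighbours_def)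
      have "w \<noteq> u" using w(2) assms(1) by (fastforce simp: simple_graph_def)
      then have "y \<noteq> f u" using assms(2,6) w inj_on_eq_iff by metis
      moreover have "{f u, y} \<in> E" using assms(5) w by (auto simp: induced_edges_def)
      moreover have "y \<in> W" using assms(3) w by blast
      ultimately show "y \<in> neighbours V E (f u) \<inter> (W - {f u})"
        using assms(4) by (auto simp: neighbours_def)
    qed
  qed
  finally show ?thesis .
qed

lemma min_degree_le_card_neighbours_in_max_G_free:
  assumes "simple_graph VH EH" and "simple_graph VG EG"
    and "max_G_free VG EG VH EH S" and "v \<in> VH - S"
  shows "min_degree VG EG \<le> card (neighbours VH EH v \<inter> S)"
proof -
  have SV: "S \<subseteq> VH" using assms(3) by (simp add: max_G_free_def G_free_def)
  have fS: "finite S" using SV assms(1) finite_subset by (auto simp: simple_graph_def)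
  have "\<not> G_free VG EG VH EH (insert v S)"
    using assms(3,4) fS by (fastforce simp: max_G_free_def)
  then obtain f where f: "inj_on f VG" "f ` VG \<subseteq> insert v S"
      "\<forall>e\<in>EG. f ` e \<in> induced_edges EH (insert v S)"
    using SV assms(4) by (auto simp: G_free_def contains_copy_def)
  have "v \<in> f ` VG"
  proof (rule ccontr)
    assume "v \<notin> f ` VG"
    then have "contains_copy VG EG S (induced_edges EH S)"
      using contains_copy_restrict[OF assms(2) f(1) _ _ f(3)] f(2) by blast
    then show False using assms(3) by (simp add: max_G_free_def G_free_def)
  qed
  then obtain u where u: "u \<in> VG" "f u = v" by blast
  have "min_degree VG EG \<le> degree VG EG u"
    unfolding min_degree_def using u assms(2) by (simp add: simple_graph_def)
  also have "\<dots> \<le> card (neighbours VH EH v \<inter> (insert v S - {v}))"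
    using degree_le_card_neighbours_of_image[OF assms(2) f(1,2) _ f(3) u(1)] SV assms(4) fS u(2)
    by simp
  finally show ?thesis using assms(4) by simp
qed

theorem theorem2p2:
  fixes VH :: "'a set" and EH :: "'a set set" and VG :: "'b set" and EG :: "'b set set"
    and S :: "'a set"
  assumes "simple_graph VH EH" and "simple_graph VG EG"
    and "VH \<noteq> {}" and "VG \<noteq> {}"
    and "max_degree VH EH \<ge> 1" and "min_degree VG EG \<ge> 1"
    and "max_G_free VG EG VH EH S"
  shows "real (card VH) - (\<Sum>i = min_degree VG EG..max_degree VH EH. real i * real (n_i VH EH S i))
            / real (min_degree VG EG) \<le> real (card S)
     \<and> real (card S) \<le> real (card VH) - (\<Sum>i = min_degree VG EG..max_degree VH EH. real i * real (n_i VH EH S i))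
            / real (max_degree VH EH)"
proof -
  define \<delta> where "\<delta> = min_degree VG EG"
  define \<Delta> where "\<Delta> = max_degree VH EH"
  define c where "c v = card (neighbours VH EH v \<inter> S)" for v
  have fVH: "finite VH" using assms(1) by (simp add: simple_graph_def)
  have SV: "S \<subseteq> VH" using assms(7) by (simp add: max_G_free_def G_free_def)
  have c_bounds: "\<delta> \<le> c v \<and> c v \<le> \<Delta>" if "v \<in> VH - S" for v
    using that min_degree_le_card_neighbours_in_max_G_free[OF assms(1,2,7)]
      card_neighbours_inter_le_max_degree[OF fVH] unfolding \<delta>_def \<Delta>_def c_def by blast
  define X where "X = (\<Sum>i = \<delta>..\<Delta>. real i * real (n_i VH EH S i))"
  have "(\<Sum>i = \<delta>..\<Delta>. i * n_i VH EH S i) = (\<Sum>v\<in>VH - S. c v)"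
    unfolding n_i_def using sum_weighted_fibre_card[of "VH - S" \<delta> c \<Delta>] c_bounds fVH
    by (simp add: c_def)
  then have X_eq: "X = real (\<Sum>v\<in>VH - S. c v)"
    unfolding X_def by (metis (no_types, lifting) of_nat_mult of_nat_sum sum.cong)
  have "\<delta> * card (VH - S) \<le> (\<Sum>v\<in>VH - S. c v)" "(\<Sum>v\<in>VH - S. c v) \<le> \<Delta> * card (VH - S)"
    using sum_mono[of "VH - S" "\<lambda>_. \<delta>" c] sum_mono[of "VH - S" c "\<lambda>_. \<Delta>"] c_bounds
    by (auto simp: mult.commute)
  moreover have "real (card (VH - S)) = real (card VH) - real (card S)"
    using card_Diff_subset[OF finite_subset[OF SV fVH] SV] card_mono[OF fVH SV] by simp
  ultimately have "real \<delta> * (real (card VH) - real (card S)) \<le> X"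
    "X \<le> real \<Delta> * (real (card VH) - real (card S))"
    unfolding X_eq by (metis of_nat_le_iff of_nat_mult)+
  moreover have "real \<delta> \<ge> 1" "real \<Delta> \<ge> 1" using assms(5,6) \<delta>_def \<Delta>_def by auto
  ultimately show ?thesis unfolding \<delta>_def[symmetric] \<Delta>_def[symmetric] X_def[symmetric]
    by (simp add: field_simps)
qed

end
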